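(* Let $A$, $c$ be as in the context, let $u\in\mathcal O_c$ and let $\tau$ be a face of $\Delta_c$. If the group relaxation $G^\tau(Au)$ solves $IP_{A,c}(Au)$, then $G^\tau(Av)$ solves $IP_{A,c}(Av)$ for all $v\in S(u,\tau):=u+\mathbb N\{e_i:i\in\tau\}$.
   Context: $A\in\mathbb Z^{d\times n}$ has rank $d$, columns $a_1,\dots,a_n$, $cone(A)$ pointed, $\{x\in\mathbb R^n_{\ge0}:Ax=0\}=\{0\}$, $\mathbb ZA=\mathbb Z^d$, $\mathbb NA=\{Au:u\in\mathbb N^n\}$. For $c\in\mathbb Z^n$ and $b\in\mathbb NA$, $IP_{A,c}(b)=\min\{c\cdot x: Ax=b,\ x\in\mathbb N^n\}$. The regular triangulation $\Delta_c$ is the collection of $\sigma\subseteq\{1,\dots,n\}$ for which some $y\in\mathbb R^d$ has $y\cdot a_j=c_j$ ($j\in\sigma$), $y\cdot a_j<c_j$ ($j\notin\sigma$). $c$ is generic: $\Delta_c$ is a triangulation and every $IP_{A,c}(b)$ has a unique optimal solution. $\mathcal O_c\subseteq\mathbb N^n$ is the set of optimal solutions of all $IP_{A,c}(b)$, $b\in\mathbb NA$. For a maximal face $\sigma$ of $\Delta_c$ let $\tilde c_{\bar\sigma}=c_{\bar\sigma}-c_\sigma A_\sigma^{-1}A_{\bar\sigma}$, and for a face $\tau\subseteq\sigma$ let $\tilde c_{\bar\tau}$ be its extension by zeros to $\mathbb R^{|\bar\tau|}$. The group relaxation $G^\tau(b)$ is $\min\{\tilde c_{\bar\tau}\cdot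 x_{\bar\tau}: A_\tau x_\tau+A_{\bar\tau}x_{\bar\tau}=b,\ x_{\bar\tau}\ge0,\ (x_\tau,x_{\bar\tau})\in\mathbb Z^n\}$; it solves $IP_{A,c}(b)$ if its optimal solution is non-negative. $e_i$ is the $i$-th unit vector of $\mathbb R^n$. *)

theory Defs
  imports "HOL-Analysis.Analysis"
begin

text \<open>Column indices {1..n} are rendered by a finite type 'n, row indices {1..d} by 'd.
  Integer vectors are int^'n, N^n is the set of componentwise non-negative integer vectors.\<close>

definition realmat :: "int^'n^'d \<Rightarrow> real^'n^'d" where
  "realmat A = (\<chi> i j. real_of_int (A $ i $ j))"

definition col :: "int^'n^'d \<Rightarrow> 'n \<Rightarrow> real^'d" where
  "col A j = column j (realmat A)"

definition nonneg :: "int^'n \<Rightarrow> bool" where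
  "nonneg x \<longleftrightarrow> (\<forall>j. x $ j \<ge> 0)"

definition cdot :: "int^'n \<Rightarrow> int^'n \<Rightarrow> int" where
  "cdot c x = (\<Sum>j\<in>UNIV. c $ j * x $ j)"

definition coneA :: "int^'n^'d \<Rightarrow> (real^'d) set" where
  "coneA A = {realmat A *v x | x. \<forall>j. x $ j \<ge> 0}"

definition pointed_cone :: "int^'n^'d \<Rightarrow> bool" where
  "pointed_cone A \<longleftrightarrow> (\<forall>z. z \<in> coneA A \<and> - z \<in> coneA A \<longrightarrow> z = 0)"

definition standing_A :: "int^'n^'d \<Rightarrow> bool" where
  "standing_A A \<longleftrightarrow>
     rank (realmat A) = CARD('d) \<and>
     pointed_cone A \<and>
     (\<forall>x::real^'n. (\<forall>j. x $ j \<ge> 0) \<and> realmat A *v x = 0 \<longrightarrow> x = 0) \<and>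
     (\<forall>b::int^'d. \<exists>x::int^'n. A *v x = b)"

definition NA :: "int^'n^'d \<Rightarrow> (int^'d) set" where
  "NA A = {A *v u | u. nonneg u}"

definition IP_opt :: "int^'n^'d \<Rightarrow> int^'n \<Rightarrow> int^'d \<Rightarrow> int^'n \<Rightarrow> bool" where
  "IP_opt A c b x \<longleftrightarrow> nonneg x \<and> A *v x = b \<and>
     (\<forall>x'. nonneg x' \<and> A *v x' = b \<longrightarrow> cdot c x \<le> cdot c x')"

text \<open>The regular subdivision Delta_c (set of its faces).\<close>
definition Delta :: "int^'n^'d \<Rightarrow> int^'n \<Rightarrow> 'n set set" where
  "Delta A c = {\<sigma>. \<exists>y::real^'d.
      (\<forall>j\<in>\<sigma>. y \<bullet> col A j = real_of_int (c $ j)) \<and>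
      (\<forall>j. j \<notin> \<sigma> \<longrightarrow> y \<bullet> col A j < real_of_int (c $ j))}"

definition is_triangulation :: "int^'n^'d \<Rightarrow> int^'n \<Rightarrow> bool" where
  "is_triangulation A c \<longleftrightarrow>
     (\<forall>\<sigma>\<in>Delta A c. inj_on (col A) \<sigma> \<and> independent (col A ` \<sigma>))"

definition generic :: "int^'n^'d \<Rightarrow> int^'n \<Rightarrow> bool" where
  "generic A c \<longleftrightarrow> is_triangulation A c \<and> (\<forall>b\<in>NA A. \<exists>!x. IP_opt A c b x)"

definition Oc :: "int^'n^'d \<Rightarrow> int^'n \<Rightarrow> (int^'n) set" where
  "Oc A c = {x. \<exists>b\<in>NA A. IP_opt A c b x}"

definition maximal_face :: "int^'n^'d \<Rightarrow> int^'n \<Rightarrow> 'n set \<Rightarrow> bool" where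
  "maximal_face A c \<sigma> \<longleftrightarrow> \<sigma> \<in> Delta A c \<and> (\<forall>\<sigma>'\<in>Delta A c. \<sigma> \<subseteq> \<sigma>' \<longrightarrow> \<sigma>' = \<sigma>)"

text \<open>For a maximal face sigma, c_sigma A_sigma^{-1} is the unique y with y.a_j = c_j (j in sigma).
  ctilde is reduced cost c_j - c_sigma A_sigma^{-1} a_j, set to 0 on sigma
  (this realizes the extension by zeros of ctilde_{sigma-bar} to tau-bar).\<close>
definition ctilde :: "int^'n^'d \<Rightarrow> int^'n \<Rightarrow> 'n set \<Rightarrow> 'n \<Rightarrow> real" where
  "ctilde A c \<sigma> j = (if j \<in> \<sigma> then 0 else
      real_of_int (c $ j) - (THE y::real^'d. \<forall>i\<in>\<sigma>. y \<bullet> col A i = real_of_int (c $ i)) \<bullet> col A j)"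

definition group_feasible :: "int^'n^'d \<Rightarrow> 'n set \<Rightarrow> int^'d \<Rightarrow> int^'n \<Rightarrow> bool" where
  "group_feasible A \<tau> b x \<longleftrightarrow> A *v x = b \<and> (\<forall>j. j \<notin> \<tau> \<longrightarrow> x $ j \<ge> 0)"

definition group_obj :: "int^'n^'d \<Rightarrow> int^'n \<Rightarrow> 'n set \<Rightarrow> 'n set \<Rightarrow> int^'n \<Rightarrow> real" where
  "group_obj A c \<sigma> \<tau> x = (\<Sum>j\<in>-\<tau>. ctilde A c \<sigma> j * real_of_int (x $ j))"

definition group_opt :: "int^'n^'d \<Rightarrow> int^'n \<Rightarrow> 'n set \<Rightarrow> 'n set \<Rightarrow> int^'d \<Rightarrow> int^'n \<Rightarrow> bool" where
  "group_opt A c \<sigma> \<tau> b x \<longleftrightarrow> group_feasible A \<tau> b x \<and>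
     (\<forall>x'. group_feasible A \<tau> b x' \<longrightarrow> group_obj A c \<sigma> \<tau> x \<le> group_obj A c \<sigma> \<tau> x')"

definition group_solves :: "int^'n^'d \<Rightarrow> int^'n \<Rightarrow> 'n set \<Rightarrow> 'n set \<Rightarrow> int^'d \<Rightarrow> bool" where
  "group_solves A c \<sigma> \<tau> b \<longleftrightarrow> (\<exists>x. group_opt A c \<sigma> \<tau> b x \<and> nonneg x)"

definition Sset :: "int^'n \<Rightarrow> 'n set \<Rightarrow> (int^'n) set" where
  "Sset u \<tau> = {u + (\<Sum>i\<in>\<tau>. of_nat (lam i) *s axis i 1) | lam :: 'n \<Rightarrow> nat. True}"

end

theory Submission
  imports Defs
begin

text \<open>The coordinates indexed by \<open>\<tau>\<close> are unconstrained in \<open>G\<^sup>\<tau>\<close> and do not enter its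
  objective, so translating by a vector \<open>w\<close> supported on \<open>\<tau>\<close> maps the feasible points of
  \<open>G\<^sup>\<tau>(b)\<close> bijectively onto those of \<open>G\<^sup>\<tau>(b + Aw)\<close> without changing the cost. Hence the
  optimal solution of \<open>G\<^sup>\<tau>(Au)\<close> shifted by \<open>w \<in> \<nat>{e\<^sub>i : i \<in> \<tau>}\<close> is optimal for
  \<open>G\<^sup>\<tau>(A(u + w))\<close>, and it stays non-negative. None of the hypotheses on \<open>A\<close>, \<open>c\<close>, \<open>u\<close> and
  \<open>\<sigma>\<close> is needed for this.\<close>

lemma Sset_memE:
  assumes "v \<in> Sset u \<tau>"
  obtains w where "v = u + w" and "nonneg w" and "\<And>j. j \<notin> \<tau> \<Longrightarrow> w $ j = 0"
proof -
  obtain lam :: "'a \<Rightarrow> nat" where v: "v = u + (\<Sum>i\<in>\<tau>. of_nat (lam i) *s axis i 1)"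
    using assms unfolding Sset_def by blast
  define w where "w = (\<Sum>i\<in>\<tau>. of_nat (lam i) *s axis i (1::int))"
  have w_component: "w $ j = (if j \<in> \<tau> then int (lam j) else 0)" for j
    unfolding w_def by (simp add: sum_component axis_def if_distrib cong: if_cong)
  show thesis
  proof (rule that)
    show "v = u + w"
      unfolding v w_def ..
  qed (simp_all add: nonneg_def w_component)
qed

lemma group_obj_add_supported:
  assumes "\<And>j. j \<notin> \<tau> \<Longrightarrow> w $ j = 0"
  shows "group_obj A c \<sigma> \<tau> (x + w) = group_obj A c \<sigma> \<tau> x"
  unfolding group_obj_def using assms by (intro sum.cong) auto

lemma group_feasible_add_supported_iff:
  assumes "\<And>j. j \<notin> \<tau> \<Longrightarrow> w $ j = 0"
  shows "group_feasible A \<tau> (b + A *v w) x \<longleftrightarrow> group_feasible A \<tau> b (x - w)"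
  unfolding group_feasible_def using assms
  by (auto simp: matrix_vector_mult_diff_distrib algebra_simps)

lemma group_opt_add_supported:
  assumes opt: "group_opt A c \<sigma> \<tau> b x" and supp: "\<And>j. j \<notin> \<tau> \<Longrightarrow> w $ j = 0"
  shows "group_opt A c \<sigma> \<tau> (b + A *v w) (x + w)"
  unfolding group_opt_def
proof safe
  have "group_feasible A \<tau> b x"
    using opt unfolding group_opt_def by blast
  then show "group_feasible A \<tau> (b + A *v w) (x + w)"
    by (simp add: group_feasible_add_supported_iff[OF supp])
next
  fix x' assume "group_feasible A \<tau> (b + A *v w) x'"
  then have "group_feasible A \<tau> b (x' - w)"
    using group_feasible_add_supported_iff[OF supp] by blast
  have "group_obj A c \<sigma> \<tau> (x + w) = group_obj A c \<sigma> \<tau> x"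
    using supp by (rule group_obj_add_supported)
  also have "\<dots> \<le> group_obj A c \<sigma> \<tau> (x' - w)"
    using opt \<open>group_feasible A \<tau> b (x' - w)\<close> unfolding group_opt_def by blast
  also have "\<dots> = group_obj A c \<sigma> \<tau> (x' - w + w)"
    using supp by (rule group_obj_add_supported[symmetric])
  finally show "group_obj A c \<sigma> \<tau> (x + w) \<le> group_obj A c \<sigma> \<tau> x'"
    by simp
qed

lemma group_solves_add_supported:
  assumes "group_solves A c \<sigma> \<tau> b"
    and "nonneg w" and "\<And>j. j \<notin> \<tau> \<Longrightarrow> w $ j = 0"
  shows "group_solves A c \<sigma> \<tau> (b + A *v w)"
proof -
  obtain x where "group_opt A c \<sigma> \<tau> b x" and "nonneg x"
    using assms(1) unfolding group_solves_def by blast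
  then have "group_opt A c \<sigma> \<tau> (b + A *v w) (x + w)" and "nonneg (x + w)"
    using assms(2,3) by (simp_all add: group_opt_add_supported nonneg_def)
  then show ?thesis
    unfolding group_solves_def by blast
qed

theorem lemma2p10:
  fixes A :: "int^'n^'d" and c :: "int^'n" and u :: "int^'n"
    and \<sigma> \<tau> :: "'n set"
  assumes "standing_A A"
    and "generic A c"
    and "u \<in> Oc A c"
    and "\<tau> \<in> Delta A c"
    and "maximal_face A c \<sigma>" and "\<tau> \<subseteq> \<sigma>"
    and "group_solves A c \<sigma> \<tau> (A *v u)"
  shows "\<forall>v\<in>Sset u \<tau>. group_solves A c \<sigma> \<tau> (A *v v)"
proof
  fix v assume "v \<in> Sset u \<tau>"
  then obtain w where "v = u + w" and "nonneg w" and "\<And>j. j \<notin> \<tau> \<Longrightarrow> w $ j = 0"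
    by (blast elim: Sset_memE)
  then show "group_solves A c \<sigma> \<tau> (A *v v)"
    using group_solves_add_supported[OF assms(7)] by (simp add: matrix_vector_right_distrib)
qed

end
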